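(* Let $p,p'\ge1$ with $|p-p'|=1$ and let $X=\alpha_{(p,p')}(Y)$ where $Y$ is a Sturmian word in which $bb$ does not occur. Then: (i) $|M_{(X,b)}\cap O_X|=1$; (ii) $|M_{(X,a)}\cap O_X|=(k+1)/2$, where $k$ is the (unique) odd element of $\{p-1,p'-1\}$; (iii) $|M_{(X,aa)}\cap O_X|=k/2$, where $k$ is the (unique) even element of $\{p-1,p'-1\}$; (iv) $|M_X\cap O_X|=\max(p,p')$.
   Context: $\alpha_{(p,p')}$ is the morphism $a\mapsto a^pb$, $b\mapsto a^{p'}b$. A Sturmian word is a right-infinite aperiodic word over $\{a,b\}$ with exactly $n+1$ factors of each length $n$. A palindrome $P$ is maximal in $X$ if $lPl'$ is a factor of $X$ for letters $l\neq l'$ (a maximal occurrence). $M_X$ is the set of distinct maximal palindromes of $X$; $M_{(X,a)}$, $M_{(X,b)}$, $M_{(X,aa)}$ are those whose center (middle letter for odd length, middle two letters for even length) is $a$, $b$, $aa$ respectively. A center occurrence is an occurrence of $a$, $b$ or $aa$. Write $Y=y_1y_2\cdots$, $X=\alpha(y_1)\alpha(y_2)\cdots$, $\alpha(y_j)$ at positions $s_j+1,\dots,s_j+|\alpha(y_j)|$, $s_j=\sum_{t<j}|\alpha(y_t)|$. The reflection of an occurrence $y_j=a$ (resp. $b$) is the center of the run $a^p$ (resp. $a^{p'}$) at positions $s_j+1,\dots,s_j+p$ (resp. $s_j+p'$); the reflection of an occurrence $y_jy_{j+1}=aa$ is the $b$ at position $s_j+p+1$. A center occurrence of $X$ is original if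 it is not the reflection of any center occurrence of $Y$. $O_X$ is the set of original palindromes: maximal palindromes of $X$ having a maximal occurrence whose center occurrence is original. *)

theory Defs
  imports Main
begin

text \<open>Letters of the alphabet {a,b}.  Infinite words are functions nat \<Rightarrow> letter,
  positions are 0-indexed (position i here is position i+1 in the paper).\<close>
datatype letter = La | Lb

definition occurs_at :: "(nat \<Rightarrow> letter) \<Rightarrow> letter list \<Rightarrow> nat \<Rightarrow> bool" where
  "occurs_at X w i \<longleftrightarrow> map X [i..<i + length w] = w"

definition is_factor :: "letter list \<Rightarrow> (nat \<Rightarrow> letter) \<Rightarrow> bool" where
  "is_factor w X \<longleftrightarrow> (\<exists>i. occurs_at X w i)"

definition ult_periodic :: "(nat \<Rightarrow> letter) \<Rightarrow> bool" where
  "ult_periodic X \<longleftrightarrow> (\<exists>q>0. \<exists>N. \<forall>i\<ge>N. X (i + q) = X i)"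

definition sturmian :: "(nat \<Rightarrow> letter) \<Rightarrow> bool" where
  "sturmian X \<longleftrightarrow> \<not> ult_periodic X \<and>
     (\<forall>n. card {w. length w = n \<and> is_factor w X} = n + 1)"

fun alpha :: "nat \<Rightarrow> nat \<Rightarrow> letter \<Rightarrow> letter list" where
  "alpha p p' La = replicate p La @ [Lb]"
| "alpha p p' Lb = replicate p' La @ [Lb]"

definition spos :: "nat \<Rightarrow> nat \<Rightarrow> (nat \<Rightarrow> letter) \<Rightarrow> nat \<Rightarrow> nat" where
  "spos p p' Y j = (\<Sum>t<j. length (alpha p p' (Y t)))"

text \<open>X = alpha(y_0) alpha(y_1) ... as an infinite word.\<close>
definition morph_word :: "nat \<Rightarrow> nat \<Rightarrow> (nat \<Rightarrow> letter) \<Rightarrow> nat \<Rightarrow> letter" where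
  "morph_word p p' Y n =
     (let j = (LEAST j. n < spos p p' Y (Suc j)) in alpha p p' (Y j) ! (n - spos p p' Y j))"

definition pal :: "letter list \<Rightarrow> bool" where
  "pal P \<longleftrightarrow> rev P = P"

definition max_occ :: "(nat \<Rightarrow> letter) \<Rightarrow> letter list \<Rightarrow> nat \<Rightarrow> bool" where
  "max_occ X P i \<longleftrightarrow> pal P \<and> occurs_at X P i \<and> 0 < i \<and> X (i - 1) \<noteq> X (i + length P)"

definition maxpals :: "(nat \<Rightarrow> letter) \<Rightarrow> letter list set" where
  "maxpals X = {P. \<exists>i. max_occ X P i}"

definition maxpals_a :: "(nat \<Rightarrow> letter) \<Rightarrow> letter list set" where
  "maxpals_a X = {P \<in> maxpals X. odd (length P) \<and> P ! (length P div 2) = La}"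

definition maxpals_b :: "(nat \<Rightarrow> letter) \<Rightarrow> letter list set" where
  "maxpals_b X = {P \<in> maxpals X. odd (length P) \<and> P ! (length P div 2) = Lb}"

definition maxpals_aa :: "(nat \<Rightarrow> letter) \<Rightarrow> letter list set" where
  "maxpals_aa X = {P \<in> maxpals X. even (length P) \<and> length P \<ge> 2 \<and>
      P ! (length P div 2 - 1) = La \<and> P ! (length P div 2) = La}"

text \<open>Center occurrences are encoded as (start position, length), length 1 for an
  occurrence of a or b, length 2 for an occurrence of aa.\<close>
definition is_center_occ :: "(nat \<Rightarrow> letter) \<Rightarrow> nat \<times> nat \<Rightarrow> bool" where
  "is_center_occ X c \<longleftrightarrow> snd c = 1 \<or>
     (snd c = 2 \<and> X (fst c) = La \<and> X (Suc (fst c)) = La)"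

definition center_occ :: "letter list \<Rightarrow> nat \<Rightarrow> nat \<times> nat" where
  "center_occ P i = (if odd (length P) then (i + length P div 2, 1)
                     else (i + length P div 2 - 1, 2))"

text \<open>For a single letter y_j, the
  center of the run of a's of length r (r = p for a, r = p' for b) occupying positions
  s_j, ..., s_j + r - 1; for y_j y_(j+1) = aa, the b at position s_j + p.\<close>
definition reflection :: "nat \<Rightarrow> nat \<Rightarrow> (nat \<Rightarrow> letter) \<Rightarrow> nat \<times> nat \<Rightarrow> nat \<times> nat" where
  "reflection p p' Y d =
     (let j = fst d in
      if snd d = 1 then
        (let r = (if Y j = La then p else p') in
          (spos p p' Y j + (r - 1) div 2, if odd r then 1 else 2))
      else (spos p p' Y j + p, 1))"

definition original :: "nat \<Rightarrow> nat \<Rightarrow> (nat \<Rightarrow> letter) \<Rightarrow> nat \<times> nat \<Rightarrow> bool" where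
  "original p p' Y c \<longleftrightarrow> is_center_occ (morph_word p p' Y) c \<and>
     \<not> (\<exists>d. is_center_occ Y d \<and> reflection p p' Y d = c)"

definition orig_pals :: "nat \<Rightarrow> nat \<Rightarrow> (nat \<Rightarrow> letter) \<Rightarrow> letter list set" where
  "orig_pals p p' Y = {P \<in> maxpals (morph_word p p' Y).
      \<exists>i. max_occ (morph_word p p' Y) P i \<and> P \<noteq> [] \<and> original p p' Y (center_occ P i)}"

end

theory Submission
  imports Defs
begin

(*
  The word X = alpha(Y) is a sequence of blocks a^r b with r in {p, p'}.  A maximal
  palindrome whose centre lies inside a block of a's stops at the nearer end of that block,
  so it is a power a^m; its centre is original exactly when it is not the middle of the
  block, i.e. when the two block ends are at different distances, and a block of length
  max(p, p') yields every a^m with 1 <= m < max(p, p').  A maximal palindrome centred at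
  a b is a^h b a^h, h the length of the shorter neighbouring block; its centre is original
  iff that b is not the reflection of a factor aa of Y, i.e. iff the neighbouring blocks
  have different lengths, which gives h = min(p, p').  Such a b exists because the
  aperiodic word Y changes letter, and as X contains no bb there are no other original
  palindromes.  Counting odd and even m gives the four cardinalities.
*)

definition run_length :: "nat \<Rightarrow> nat \<Rightarrow> (nat \<Rightarrow> letter) \<Rightarrow> nat \<Rightarrow> nat" where
  "run_length p p' Y j = (if Y j = La then p else p')"

lemma spos_0 [simp]: "spos p p' Y 0 = 0"
  by (simp add: spos_def)

lemma spos_Suc: "spos p p' Y (Suc j) = spos p p' Y j + run_length p p' Y j + 1"
  by (cases "Y j") (simp_all add: spos_def run_length_def)

lemma spos_Suc_le: "j < j' \<Longrightarrow> spos p p' Y (Suc j) \<le> spos p p' Y j'"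
  by (rule lift_Suc_mono_le[of "spos p p' Y"]) (simp_all add: spos_Suc)

lemma morph_word_spos_add:
  assumes "t \<le> run_length p p' Y j"
  shows "morph_word p p' Y (spos p p' Y j + t) = (if t < run_length p p' Y j then La else Lb)"
proof -
  have "(LEAST j'. spos p p' Y j + t < spos p p' Y (Suc j')) = j"
  proof (rule Least_equality)
    show "spos p p' Y j + t < spos p p' Y (Suc j)"
      using assms by (simp add: spos_Suc)
  next
    fix j' assume "spos p p' Y j + t < spos p p' Y (Suc j')"
    then show "j \<le> j'"
      using spos_Suc_le[of j' j p p' Y] by (cases "j' < j") auto
  qed
  moreover have "alpha p p' (Y j) ! t = (if t < run_length p p' Y j then La else Lb)"
    using assms by (cases "Y j") (auto simp: run_length_def nth_append)
  ultimately show ?thesis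
    by (simp add: morph_word_def)
qed

lemma spos_add_exhaust:
  obtains j t where "t \<le> run_length p p' Y j" "n = spos p p' Y j + t"
proof (induction n arbitrary: thesis)
  case 0
  then show ?case by (metis le0 add_0 spos_0)
next
  case (Suc n)
  obtain j t where jt: "t \<le> run_length p p' Y j" "n = spos p p' Y j + t"
    using Suc.IH by blast
  show ?case
  proof (cases "t < run_length p p' Y j")
    case True
    then show ?thesis using jt Suc.prems[of "Suc t" j] by simp
  next
    case False
    then show ?thesis using jt Suc.prems[of 0 "Suc j"] by (simp add: spos_Suc)
  qed
qed

lemma spos_add_inject:
  assumes "t \<le> run_length p p' Y j" "t' \<le> run_length p p' Y j'"
    and "spos p p' Y j + t = spos p p' Y j' + t'"
  shows "j = j' \<and> t = t'"
proof -
  have "\<not> j < j'" "\<not> j' < j"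
    using spos_Suc_le[of j j' p p' Y] spos_Suc_le[of j' j p p' Y] assms
    by (auto simp: spos_Suc)
  then show ?thesis
    using assms(3) by simp
qed

lemma occurs_at_nth: "occurs_at X w i \<Longrightarrow> k < length w \<Longrightarrow> w ! k = X (i + k)"
  unfolding occurs_at_def by (metis add_diff_cancel_left' length_map length_upt nth_map_upt)

lemma pal_occurs_at_symmetric:
  assumes "pal P" "occurs_at X P i" "length P = 2 * h + 1 + e" "k \<le> h"
  shows "X (i + h - k) = X (i + h + e + k)"
proof -
  have "P ! (h - k) = rev P ! (h - k)"
    using assms(1) by (simp add: pal_def)
  also have "\<dots> = P ! (h + e + k)"
    using assms(3,4) by (simp add: rev_nth algebra_simps)
  finally show ?thesis
    using assms(2-4) occurs_at_nth[of X P i] by (simp add: add.assoc)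
qed

(* P occupies positions i .. i + 2h + e, its centre the positions i + h .. i + h + e. *)
lemma max_occ_radius:
  assumes mo: "max_occ X P i" and len: "length P = 2 * h + 1 + e"
    and left: "\<And>k. 1 \<le> k \<Longrightarrow> k \<le> L \<Longrightarrow> X (i + h - k) = La"
    and left_end: "L < i + h \<Longrightarrow> X (i + h - L - 1) = Lb"
    and right: "\<And>k. 1 \<le> k \<Longrightarrow> k \<le> R \<Longrightarrow> X (i + h + e + k) = La"
    and right_end: "X (i + h + e + R + 1) = Lb"
    and "L \<noteq> R"
  shows "h = min L R"
proof -
  have sym: "\<And>k. k \<le> h \<Longrightarrow> X (i + h - k) = X (i + h + e + k)"
    using mo len pal_occurs_at_symmetric by (auto simp: max_occ_def)
  have "i + length P = i + h + e + (h + 1)"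
    using len by simp
  then have ext: "X (i + h - (h + 1)) \<noteq> X (i + h + e + (h + 1))" and "0 < i"
    using mo by (simp_all add: max_occ_def add.assoc)
  have "\<not> h < min L R"
    using ext left[of "h + 1"] right[of "h + 1"] by auto
  moreover have "\<not> (L < R \<and> L < h)"
    using sym[of "L + 1"] left_end right[of "L + 1"] \<open>0 < i\<close> by auto
  moreover have "\<not> (R < L \<and> R < h)"
    using sym[of "R + 1"] left[of "R + 1"] right_end by (auto simp: add.assoc)
  ultimately show ?thesis
    using \<open>L \<noteq> R\<close> by linarith
qed

lemma center_occ_nonempty:
  "P \<noteq> [] \<Longrightarrow> center_occ P i = (i + (length P - 1) div 2, 1 + (length P - 1) mod 2)"
  by (cases "length P") (auto simp: center_occ_def elim!: oddE evenE)

locale alpha_image =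
  fixes p p' :: nat and Y :: "nat \<Rightarrow> letter"
  assumes p_pos: "1 \<le> p" and p'_pos: "1 \<le> p'"
begin

abbreviation X where "X \<equiv> morph_word p p' Y"
abbreviation S where "S \<equiv> spos p p' Y"
abbreviation r where "r \<equiv> run_length p p' Y"
abbreviation pal_b where "pal_b \<equiv> replicate (min p p') La @ Lb # replicate (min p p') La"

lemma run_length_pos: "1 \<le> r j"
  using p_pos p'_pos by (simp add: run_length_def)

lemma run_length_le_max: "r j \<le> max p p'"
  by (simp add: run_length_def)

lemma run_length_change:
  "Y j \<noteq> Y (Suc j) \<Longrightarrow> r j = p \<and> r (Suc j) = p' \<or> r j = p' \<and> r (Suc j) = p"
  by (cases "Y j"; cases "Y (Suc j)") (simp_all add: run_length_def)

lemma spos_pos: "0 < j \<Longrightarrow> 0 < S j"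
  using spos_Suc_le[of 0 j p p' Y] by (simp add: spos_Suc)

lemma morph_word_in_run: "S j \<le> n \<Longrightarrow> n < S j + r j \<Longrightarrow> X n = La"
  using morph_word_spos_add[of "n - S j" p p' Y j] by simp

lemma morph_word_run_end: "X (S j + r j) = Lb"
  using morph_word_spos_add[of "r j" p p' Y j] by simp

lemma morph_word_before_run:
  assumes "0 < S j" shows "X (S j - 1) = Lb"
proof -
  obtain j0 where "j = Suc j0"
    using assms by (cases j) auto
  then show ?thesis
    using morph_word_run_end[of j0] by (simp add: spos_Suc)
qed

lemma morph_word_Lb_Suc: "X n = Lb \<Longrightarrow> X (Suc n) = La"
proof -
  assume "X n = Lb"
  obtain j t where "t \<le> r j" "n = S j + t"
    by (rule spos_add_exhaust)
  with \<open>X n = Lb\<close> have "Suc n = S (Suc j)"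
    using morph_word_spos_add[of t p p' Y j] by (auto simp: spos_Suc split: if_splits)
  then show "X (Suc n) = La"
    using morph_word_in_run[of "Suc j"] run_length_pos[of "Suc j"] by simp
qed

lemma map_morph_word_run:
  "S j \<le> a \<Longrightarrow> b \<le> S j + r j \<Longrightarrow> map X [a..<b] = replicate (b - a) La"
  by (rule replicate_eqI) (auto intro!: morph_word_in_run[of j])

lemma map_morph_word_around_run_end:
  assumes "m \<le> r j" "m \<le> r (Suc j)"
  shows "map X [S j + r j - m..<S j + r j - m + (2 * m + 1)] = replicate m La @ Lb # replicate m La"
proof -
  let ?a = "S j + r j - m"
  have end_eq: "?a + (2 * m + 1) = S j + r j + (1 + m)"
    using assms(1) by simp
  have "[?a..<?a + (2 * m + 1)] = [?a..<S j + r j] @ [S j + r j..<S j + r j + (1 + m)]"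
    unfolding end_eq by (rule upt_add_eq_append) simp
  also have "[S j + r j..<S j + r j + (1 + m)] = (S j + r j) # [S (Suc j)..<S (Suc j) + m]"
    by (simp add: spos_Suc upt_conv_Cons)
  finally have "map X [?a..<?a + (2 * m + 1)]
      = map X [?a..<S j + r j] @ X (S j + r j) # map X [S (Suc j)..<S (Suc j) + m]"
    by simp
  also have "\<dots> = replicate m La @ Lb # replicate m La"
    using map_morph_word_run[of j ?a "S j + r j"] map_morph_word_run[of "Suc j"]
      morph_word_run_end[of j] assms by simp
  finally show ?thesis .
qed

lemma reflection_of_run:
  assumes "r j = 2 * t + 1 + e" "e \<le> 1"
  shows "reflection p p' Y (j, 1) = (S j + t, 1 + e)"
proof -
  have "reflection p p' Y (j, 1) = (S j + (r j - 1) div 2, if odd (r j) then 1 else 2)"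
    by (simp add: reflection_def run_length_def Let_def)
  moreover have "e = 0 \<or> e = 1"
    using assms(2) by auto
  ultimately show ?thesis
    using assms(1) by auto
qed

lemma reflection_of_aa:
  "Y j = La \<Longrightarrow> reflection p p' Y (j, 2) = (S j + r j, 1)"
  by (simp add: reflection_def run_length_def)

lemma reflection_cases:
  assumes "is_center_occ Y d"
  obtains j t e where "e \<le> 1" "r j = 2 * t + 1 + e" "reflection p p' Y d = (S j + t, 1 + e)"
  | j where "Y j = La" "Y (Suc j) = La" "reflection p p' Y d = (S j + r j, 1)"
proof -
  obtain j k where d: "d = (j, k)"
    by (cases d)
  show thesis
  proof (cases "k = 1")
    case True
    have "r j = 2 * ((r j - 1) div 2) + 1 + (r j - 1) mod 2" "(r j - 1) mod 2 \<le> 1"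
      using run_length_pos[of j] by simp_all
    then show thesis
      using that(1) reflection_of_run d True by blast
  next
    case False
    then show thesis
      using that(2)[of j] assms reflection_of_aa[of j] d by (auto simp: is_center_occ_def)
  qed
qed

lemma original_palindrome_in_run:
  assumes mo: "max_occ X P i" and len: "length P = 2 * h + 1 + e" and "e \<le> 1"
    and centre: "X (i + h) = La" "X (i + h + e) = La"
    and orig: "original p p' Y (i + h, 1 + e)"
  shows "P = replicate (length P) La \<and> length P < max p p'"
proof -
  obtain j t where "t \<le> r j" and c: "i + h = S j + t"
    by (rule spos_add_exhaust)
  then have "t < r j"
    using centre(1) morph_word_spos_add[of t p p' Y j] by (auto split: if_splits)
  then have te: "t + e < r j"
    using centre(2) c \<open>e \<le> 1\<close> morph_word_spos_add[of "t + e" p p' Y j]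
    by (auto simp: add.assoc split: if_splits)
  define R where "R = r j - 1 - e - t"
  have "r j \<noteq> 2 * t + 1 + e"
  proof
    assume "r j = 2 * t + 1 + e"
    then have "reflection p p' Y (j, 1) = (i + h, 1 + e)"
      using reflection_of_run \<open>e \<le> 1\<close> c by simp
    then show False
      using orig by (auto simp: original_def is_center_occ_def)
  qed
  then have "t \<noteq> R"
    using te by (auto simp: R_def)
  have h: "h = min t R"
  proof (rule max_occ_radius[OF mo len])
    show "X (i + h - k) = La" if "1 \<le> k" "k \<le> t" for k
      using that c te by (intro morph_word_in_run[of j]) auto
    show "X (i + h - t - 1) = Lb" if "t < i + h"
      using that c morph_word_before_run[of j] by simp
    show "X (i + h + e + k) = La" if "1 \<le> k" "k \<le> R" for k
      using that c te by (intro morph_word_in_run[of j]) (auto simp: R_def)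
    show "X (i + h + e + R + 1) = Lb"
      using c te morph_word_run_end[of j] by (simp add: R_def)
  qed fact
  then have "S j \<le> i" "i + length P \<le> S j + r j"
    using c len te by (auto simp: R_def)
  then have "P = replicate (length P) La"
    using mo map_morph_word_run[of j i "i + length P"] by (simp add: max_occ_def occurs_at_def)
  moreover have "length P < r j"
    using h len te \<open>t \<noteq> R\<close> by (auto simp: R_def)
  ultimately show ?thesis
    using run_length_le_max[of j] by simp
qed

lemma original_palindrome_at_b:
  assumes "p \<noteq> p'" and no_bb: "\<not> (\<exists>j. Y j = Lb \<and> Y (Suc j) = Lb)"
    and mo: "max_occ X P i" and len: "length P = 2 * h + 1"
    and centre: "X (i + h) = Lb" and orig: "original p p' Y (i + h, 1)"
  shows "P = pal_b"
proof -
  obtain j t where "t \<le> r j" and "i + h = S j + t"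
    by (rule spos_add_exhaust)
  then have c: "i + h = S j + r j"
    using centre morph_word_spos_add[of t p p' Y j] by (auto split: if_splits)
  have "Y j \<noteq> Y (Suc j)"
  proof
    assume "Y j = Y (Suc j)"
    then have "Y j = La \<and> Y (Suc j) = La"
      using no_bb by (cases "Y j") auto
    then have "is_center_occ Y (j, 2) \<and> reflection p p' Y (j, 2) = (i + h, 1)"
      using reflection_of_aa c by (simp add: is_center_occ_def)
    then show False
      using orig by (auto simp: original_def)
  qed
  then have runs: "r j = p \<and> r (Suc j) = p' \<or> r j = p' \<and> r (Suc j) = p"
    by (rule run_length_change)
  have h: "h = min (r j) (r (Suc j))"
  proof (rule max_occ_radius[OF mo])
    show "length P = 2 * h + 1 + 0"
      using len by simp
    show "X (i + h - k) = La" if "1 \<le> k" "k \<le> r j" for k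
      using that c by (intro morph_word_in_run[of j]) auto
    show "X (i + h - r j - 1) = Lb" if "r j < i + h"
      using that c morph_word_before_run[of j] by simp
    show "X (i + h + 0 + k) = La" if "1 \<le> k" "k \<le> r (Suc j)" for k
      using that c by (intro morph_word_in_run[of "Suc j"]) (auto simp: spos_Suc)
    show "X (i + h + 0 + r (Suc j) + 1) = Lb"
      using c morph_word_run_end[of "Suc j"] by (simp add: spos_Suc)
    show "r j \<noteq> r (Suc j)"
      using runs \<open>p \<noteq> p'\<close> by auto
  qed
  then have "i = S j + r j - h"
    using c by simp
  then have "P = replicate h La @ Lb # replicate h La"
    using mo len h map_morph_word_around_run_end[of h j] by (simp add: max_occ_def occurs_at_def)
  then show ?thesis
    using h runs by (auto simp: min.commute)
qed

lemma run_palindrome_original: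
  assumes "0 < j" "r j = max p p'" "1 \<le> m" "m < max p p'"
  shows "replicate m La \<in> orig_pals p p' Y"
proof -
  define h e where "h = (m - 1) div 2" and "e = (m - 1) mod 2"
  have len: "m = 2 * h + 1 + e" "e \<le> 1"
    using assms(3) by (simp_all add: h_def e_def)
  have run: "X n = La" if "S j \<le> n" "n < S j + m" for n
    using that assms by (intro morph_word_in_run[of j]) auto
  have mo: "max_occ X (replicate m La) (S j)"
    using map_morph_word_run[of j "S j" "S j + m"] spos_pos[OF assms(1)]
      morph_word_before_run[of j] morph_word_in_run[of j "S j + m"] assms
    by (simp add: max_occ_def pal_def occurs_at_def)
  have not_reflection: "reflection p p' Y d \<noteq> (S j + h, 1 + e)" if "is_center_occ Y d" for d
    using that
  proof (cases rule: reflection_cases)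
    case (1 j' t' e')
    show ?thesis
    proof
      assume "reflection p p' Y d = (S j + h, 1 + e)"
      then have "j' = j \<and> t' = h" "e' = e"
        using 1 spos_add_inject[of t' p p' Y j' h j] len assms by auto
      then show False
        using 1 len assms by simp
    qed
  next
    case (2 j')
    then show ?thesis
      using morph_word_run_end[of j'] run[of "S j + h"] len by auto
  qed
  have "is_center_occ X (S j + h, 1 + e)"
    using run[of "S j + h"] run[of "Suc (S j + h)"] len by (auto simp: is_center_occ_def)
  then have "original p p' Y (center_occ (replicate m La) (S j))"
    using not_reflection assms(3) by (auto simp: original_def center_occ_nonempty h_def e_def)
  then show ?thesis
    using mo assms(3) by (auto simp: orig_pals_def maxpals_def)
qed

lemma b_palindrome_original:
  assumes "p \<noteq> p'" "0 < j" "Y j \<noteq> Y (Suc j)"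
  shows "pal_b \<in> orig_pals p p' Y"
proof -
  define m where "m = min p p'"
  define P where "P = replicate m La @ Lb # replicate m La"
  define i where "i = S j + r j - m"
  have runs: "r j = p \<and> r (Suc j) = p' \<or> r j = p' \<and> r (Suc j) = p"
    using assms(3) by (rule run_length_change)
  then have m: "m \<le> r j" "m \<le> r (Suc j)" "m = r j \<or> m = r (Suc j)" "r j \<noteq> r (Suc j)"
    using assms(1) by (auto simp: m_def)
  have len: "length P = 2 * m + 1"
    by (simp add: P_def)
  have occ: "occurs_at X P i"
    unfolding occurs_at_def len unfolding i_def P_def by (rule map_morph_word_around_run_end[OF m(1,2)])
  have "X (i - 1) \<noteq> X (i + length P)"
  proof (cases "m = r j")
    case True
    then show ?thesis
      using morph_word_before_run[of j] spos_pos[OF assms(2)] m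
        morph_word_in_run[of "Suc j" "S (Suc j) + m"]
      by (simp add: i_def P_def spos_Suc add.assoc)
  next
    case False
    then show ?thesis
      using morph_word_in_run[of j "i - 1"] morph_word_run_end[of "Suc j"] m spos_pos[OF assms(2)]
      by (auto simp: i_def P_def spos_Suc add.assoc)
  qed
  then have mo: "max_occ X P i"
    using occ spos_pos[OF assms(2)] m by (simp add: max_occ_def pal_def P_def i_def)
  have not_reflection: "reflection p p' Y d \<noteq> (S j + r j, 1)" if "is_center_occ Y d" for d
    using that
  proof (cases rule: reflection_cases)
    case (1 j' t' e')
    then show ?thesis
      using morph_word_run_end[of j] morph_word_in_run[of j' "S j' + t'"] by auto
  next
    case (2 j')
    then show ?thesis
      using spos_add_inject[of "r j'" p p' Y j' "r j" j] assms(3) by auto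
  qed
  have "center_occ P i = (S j + r j, 1)"
    using m by (simp add: center_occ_def P_def i_def)
  then have "original p p' Y (center_occ P i)"
    using not_reflection by (auto simp: original_def is_center_occ_def)
  then show ?thesis
    using mo by (auto simp: orig_pals_def maxpals_def m_def P_def)
qed

lemma orig_pals_subset:
  assumes "p \<noteq> p'" and no_bb: "\<not> (\<exists>j. Y j = Lb \<and> Y (Suc j) = Lb)"
  shows "orig_pals p p' Y \<subseteq>
    (\<lambda>m. replicate m La) ` {1..<max p p'} \<union> {pal_b}"
proof
  fix P assume "P \<in> orig_pals p p' Y"
  then obtain i where mo: "max_occ X P i" and "P \<noteq> []"
    and orig: "original p p' Y (center_occ P i)"
    by (auto simp: orig_pals_def)
  define h e where "h = (length P - 1) div 2" and "e = (length P - 1) mod 2"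
  have len: "length P = 2 * h + 1 + e" "e \<le> 1"
    using \<open>P \<noteq> []\<close> by (simp_all add: h_def e_def)
  have orig': "original p p' Y (i + h, 1 + e)"
    using orig \<open>P \<noteq> []\<close> by (simp add: center_occ_nonempty h_def e_def)
  have centre: "X (i + h + e) = X (i + h)"
    using mo len pal_occurs_at_symmetric[of P X i h e 0] by (simp add: max_occ_def)
  show "P \<in> (\<lambda>m. replicate m La) ` {1..<max p p'} \<union>
      {pal_b}"
  proof (cases "X (i + h)")
    case La
    then have "P = replicate (length P) La" "length P < max p p'"
      using original_palindrome_in_run[OF mo len] centre orig' by simp_all
    moreover have "length P \<ge> 1"
      using \<open>P \<noteq> []\<close> by (simp add: Suc_le_eq)
    ultimately show ?thesis
      by (intro UnI1 rev_image_eqI[of "length P"]) auto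
  next
    case Lb
    have "e = 0"
    proof (rule ccontr)
      assume "e \<noteq> 0"
      then have "e = 1"
        using len(2) by simp
      then have "X (Suc (i + h)) = Lb"
        using centre Lb by simp
      then show False
        using morph_word_Lb_Suc[OF Lb] by simp
    qed
    then show ?thesis
      using original_palindrome_at_b[OF assms mo _ Lb] len orig' by simp
  qed
qed

lemma orig_pals_eq:
  assumes "p \<noteq> p'" and "\<not> (\<exists>j. Y j = Lb \<and> Y (Suc j) = Lb)"
    and "0 < j" "Y j \<noteq> Y (Suc j)"
  shows "orig_pals p p' Y =
    (\<lambda>m. replicate m La) ` {1..<max p p'} \<union> {pal_b}"
proof
  obtain j' where "0 < j'" "r j' = max p p'"
    using run_length_change[OF assms(4)] assms(3) by (metis max_def zero_less_Suc)
  then show "(\<lambda>m. replicate m La) ` {1..<max p p'} \<union>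
      {pal_b} \<subseteq> orig_pals p p' Y"
    using run_palindrome_original b_palindrome_original[OF assms(1,3,4)] by auto
qed (rule orig_pals_subset[OF assms(1,2)])

lemma original_maximal_palindromes:
  assumes "p \<noteq> p'" and "\<not> (\<exists>j. Y j = Lb \<and> Y (Suc j) = Lb)"
    and "0 < j" "Y j \<noteq> Y (Suc j)"
  shows "maxpals X \<inter> orig_pals p p' Y =
      (\<lambda>m. replicate m La) ` {1..<max p p'} \<union> {pal_b}"
    and "maxpals_b X \<inter> orig_pals p p' Y = {pal_b}"
    and "maxpals_a X \<inter> orig_pals p p' Y = (\<lambda>m. replicate m La) ` {m. odd m \<and> m < max p p'}"
    and "maxpals_aa X \<inter> orig_pals p p' Y =
      (\<lambda>m. replicate m La) ` {m. even m \<and> 2 \<le> m \<and> m < max p p'}"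
proof -
  have "orig_pals p p' Y \<subseteq> maxpals X"
    by (auto simp: orig_pals_def)
  moreover note orig_pals_eq[OF assms]
  ultimately show "maxpals X \<inter> orig_pals p p' Y =
      (\<lambda>m. replicate m La) ` {1..<max p p'} \<union> {pal_b}"
    and "maxpals_b X \<inter> orig_pals p p' Y = {pal_b}"
    and "maxpals_a X \<inter> orig_pals p p' Y = (\<lambda>m. replicate m La) ` {m. odd m \<and> m < max p p'}"
    and "maxpals_aa X \<inter> orig_pals p p' Y =
      (\<lambda>m. replicate m La) ` {m. even m \<and> 2 \<le> m \<and> m < max p p'}"
    by (auto simp: maxpals_a_def maxpals_b_def maxpals_aa_def nth_append Suc_le_eq odd_pos)
qed

end

lemma not_ult_periodic_letter_change:
  assumes "\<not> ult_periodic Y"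
  obtains j where "n \<le> j" "Y j \<noteq> Y (Suc j)"
  using assms unfolding ult_periodic_def by (metis Suc_eq_plus1 zero_less_one)

lemma card_odd_less: "card {m::nat. odd m \<and> m < M} = M div 2"
proof -
  have "{m::nat. odd m \<and> m < M} = (\<lambda>k. 2 * k + 1) ` {..<M div 2}"
    by (auto elim!: oddE)
  then show ?thesis
    by (simp add: card_image inj_on_def)
qed

lemma card_even_less: "card {m::nat. even m \<and> 2 \<le> m \<and> m < M} = (M - 1) div 2"
proof -
  have "{m::nat. even m \<and> 2 \<le> m \<and> m < M} = (\<lambda>k. 2 * k + 2) ` {..<(M - 1) div 2}"
    by (auto simp: image_iff Bex_def elim!: evenE) presburger
  then show ?thesis
    by (simp add: card_image inj_on_def)
qed

lemma parity_pred_half: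
  fixes p p' :: nat
  assumes "p = p' + 1 \<or> p' = p + 1"
  shows "((if odd (p - 1) then p - 1 else p' - 1) + 1) div 2 = max p p' div 2"
    and "(if even (p - 1) then p - 1 else p' - 1) div 2 = (max p p' - 1) div 2"
  using assms by (auto elim!: oddE evenE) presburger

lemma inj_on_replicate: "inj_on (\<lambda>m. replicate m x) A"
  by (simp add: inj_on_def)

theorem lemma5:
  fixes p p' :: nat and Y :: "nat \<Rightarrow> letter"
  assumes "p \<ge> 1" and "p' \<ge> 1" and "p = p' + 1 \<or> p' = p + 1"
    and "sturmian Y"
    and "\<not> (\<exists>i. Y i = Lb \<and> Y (Suc i) = Lb)"
  shows "(finite (maxpals_b (morph_word p p' Y) \<inter> orig_pals p p' Y)
           \<and> card (maxpals_b (morph_word p p' Y) \<inter> orig_pals p p' Y) = 1)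
    \<and> (let k = (if odd (p - 1) then p - 1 else p' - 1) in
           finite (maxpals_a (morph_word p p' Y) \<inter> orig_pals p p' Y)
           \<and> card (maxpals_a (morph_word p p' Y) \<inter> orig_pals p p' Y) = (k + 1) div 2)
    \<and> (let k = (if even (p - 1) then p - 1 else p' - 1) in
           finite (maxpals_aa (morph_word p p' Y) \<inter> orig_pals p p' Y)
           \<and> card (maxpals_aa (morph_word p p' Y) \<inter> orig_pals p p' Y) = k div 2)
    \<and> (finite (maxpals (morph_word p p' Y) \<inter> orig_pals p p' Y)
           \<and> card (maxpals (morph_word p p' Y) \<inter> orig_pals p p' Y) = max p p')"
proof -
  have "p \<noteq> p'"
    using assms(3) by auto
  interpret alpha_image p p' Y
    using assms(1,2) by unfold_locales
  obtain j where "1 \<le> j" "Y j \<noteq> Y (Suc j)"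
    using assms(4) not_ult_periodic_letter_change by (auto simp: sturmian_def)
  note sets = original_maximal_palindromes[OF \<open>p \<noteq> p'\<close> assms(5) _ \<open>Y j \<noteq> Y (Suc j)\<close>]
  have "pal_b \<notin> (\<lambda>m. replicate m La) ` A" for A
    by (auto dest: arg_cong[of _ _ "\<lambda>xs. Lb \<in> set xs"])
  then have "card (maxpals X \<inter> orig_pals p p' Y) = max p p'"
    using sets(1) \<open>1 \<le> j\<close> assms(1) by (simp add: card_image inj_on_replicate)
  then show ?thesis
    using sets \<open>1 \<le> j\<close> parity_pred_half[OF assms(3)]
    by (simp add: Let_def card_image inj_on_replicate card_odd_less card_even_less)
qed

end
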